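(* Let $\mathcal{H} = \bigotimes_i \mathcal{H}_i$ and let $H_{\mathrm{else}} = \sum_i h_i$ be a $k$-local Hamiltonian on $\mathcal{H}$ with $\|h_i\| = O(1)$ whose interaction graph has degree bounded by an $O(1)$ constant. Introduce an ancillary qubit $\mathcal{A} = \mathbb{C}^2$ and let $$H' = H_{\mathbb{I}}\otimes\mathbb{I} + H_X\otimes X + H_{|1\rangle\langle1|}\otimes|1\rangle\langle 1| \in \mathrm{Herm}(\mathcal{H}\otimes\mathcal{A}),$$ where $H_{\mathbb{I}}, H_X, H_{|1\rangle\langle1|} \in \mathrm{Herm}(\mathcal{H})$ depend on a small parameter $\delta t > 0$, act on $O(1)$ sites of $\mathcal{H}$, and satisfy $\|H_{\mathbb{I}}\| = O(1)$, $\|H_X\| = O((\delta t)^{-1/2})$, $\|H_{|1\rangle\langle1|}\| = O((\delta t)^{-1})$, and $H_{|1\rangle\langle1|}^2 = \omega^2\mathbb{I}$ with $\omega = 2\pi/\delta t$. Then for every $|\psi\rangle \in \mathcal{H}$, $$e^{-i\delta t(H' + H_{\mathrm{else}}\otimes\mathbb{I})}(|\psi\rangle\otimes|0\rangle) = \big(e^{-i\delta t(H+H_{\mathrm{else}})}|\psi\rangle + O((\delta t)^2)\big)\otimes|0\rangle + O((\delta t)^{3/2})\otimes|1\rangle,$$ where $H = H_{\mathbb{I}} - \omega^{-2}H_X H_{|1\rangle\langle1|}H_X$.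
   Context: A Hamiltonian is $k$-local if it is a sum of terms each acting nontrivially on at most $k$ sites; its interaction (hyper)graph has the sites as vertices and supports of the terms as edges. $X$ is the Pauli $X$ on the ancilla, $\|\cdot\|$ the operator norm. Asymptotic notation refers to $\delta t\to 0$, with implicit constants independent of the number of sites; a term $O(f)\otimes|b\rangle$ denotes a vector $|\phi\rangle\otimes|b\rangle$ with $\||\phi\rangle\| = O(f)$. *)

theory Defs
  imports Complex_Main
begin

text \<open>Finite-dimensional linear algebra over a finite index set I.
  Matrices and vectors are functions on the index type; only values on I matter.\<close>

type_synonym 'a cmat = "'a \<Rightarrow> 'a \<Rightarrow> complex"
type_synonym 'a cvec = "'a \<Rightarrow> complex"

definition mid :: "'a cmat" where
  "mid = (\<lambda>x y. if x = y then 1 else 0)"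

definition madd :: "'a cmat \<Rightarrow> 'a cmat \<Rightarrow> 'a cmat" where
  "madd A B = (\<lambda>x y. A x y + B x y)"

definition msmul :: "complex \<Rightarrow> 'a cmat \<Rightarrow> 'a cmat" where
  "msmul c A = (\<lambda>x y. c * A x y)"

definition mmul :: "'a set \<Rightarrow> 'a cmat \<Rightarrow> 'a cmat \<Rightarrow> 'a cmat" where
  "mmul I A B = (\<lambda>x y. \<Sum>z\<in>I. A x z * B z y)"

fun mpow :: "'a set \<Rightarrow> 'a cmat \<Rightarrow> nat \<Rightarrow> 'a cmat" where
  "mpow I A 0 = mid"
| "mpow I A (Suc k) = mmul I A (mpow I A k)"

definition mexp :: "'a set \<Rightarrow> 'a cmat \<Rightarrow> 'a cmat" where
  "mexp I A = (\<lambda>x y. \<Sum>k. mpow I A k x y / of_nat (fact k))"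

definition mapply :: "'a set \<Rightarrow> 'a cmat \<Rightarrow> 'a cvec \<Rightarrow> 'a cvec" where
  "mapply I A v = (\<lambda>x. \<Sum>y\<in>I. A x y * v y)"

definition vnorm :: "'a set \<Rightarrow> 'a cvec \<Rightarrow> real" where
  "vnorm I v = sqrt (\<Sum>x\<in>I. (cmod (v x))\<^sup>2)"

definition opnorm :: "'a set \<Rightarrow> 'a cmat \<Rightarrow> real" where
  "opnorm I A = Sup {vnorm I (mapply I A v) | v. vnorm I v \<le> 1}"

definition hermitian :: "'a set \<Rightarrow> 'a cmat \<Rightarrow> bool" where
  "hermitian I A \<longleftrightarrow> (\<forall>x\<in>I. \<forall>y\<in>I. A y x = cnj (A x y))"

definition mat_eq_on :: "'a set \<Rightarrow> 'a cmat \<Rightarrow> 'a cmat \<Rightarrow> bool" where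
  "mat_eq_on I A B \<longleftrightarrow> (\<forall>x\<in>I. \<forall>y\<in>I. A x y = B x y)"

text \<open>Sites 0..n-1, site i has local dimension d i; the basis of the tensor product
  is indexed by configurations.\<close>
definition configs :: "nat \<Rightarrow> (nat \<Rightarrow> nat) \<Rightarrow> (nat \<Rightarrow> nat) set" where
  "configs n d = {x. (\<forall>i<n. x i < d i) \<and> (\<forall>i\<ge>n. x i = 0)}"

text \<open>A acts (nontrivially at most) on the sites in S, i.e. A = B_S \<otimes> identity.\<close>
definition acts_on :: "nat \<Rightarrow> (nat \<Rightarrow> nat) \<Rightarrow> nat set \<Rightarrow> (nat \<Rightarrow> nat) cmat \<Rightarrow> bool" where
  "acts_on n d S A \<longleftrightarrow> (\<exists>B. \<forall>x\<in>configs n d. \<forall>y\<in>configs n d.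
     A x y = (if (\<forall>i<n. i \<notin> S \<longrightarrow> x i = y i)
              then B (\<lambda>i. if i \<in> S then x i else 0) (\<lambda>i. if i \<in> S then y i else 0)
              else 0))"

text \<open>Ancilla qubit: basis index False = |0>, True = |1>.\<close>
definition pauliX :: "bool cmat" where
  "pauliX = (\<lambda>a b. if a \<noteq> b then 1 else 0)"

definition proj1 :: "bool cmat" where
  "proj1 = (\<lambda>a b. if a \<and> b then 1 else 0)"

definition kron :: "'a cmat \<Rightarrow> bool cmat \<Rightarrow> ('a \<times> bool) cmat" where
  "kron A B = (\<lambda>(x, a) (y, b). A x y * B a b)"

definition tensor_ket0 :: "'a cvec \<Rightarrow> ('a \<times> bool) cvec" where
  "tensor_ket0 \<psi> = (\<lambda>(x, a). if a then 0 else \<psi> x)"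

end

theory Submission
  imports Defs "HOL-Analysis.Analysis"
begin

text \<open>Write the evolved state as u0 \<otimes> |0> + u1 \<otimes> |1> and let \<phi> be the evolution of \<psi> under
  H + H_else. Because H1^2 = \<omega>^2, the fast ancilla dynamics can be solved explicitly to second
  order: with XHX = \<omega>^-2 HX H1 HX and XX = \<omega>^-1 HX^2, the ansatz
    u0 = \<phi> + \<alpha> XHX \<phi> + \<beta> XX \<phi>,   u1 = \<gamma> H1 HX \<phi> + \<alpha> HX \<phi>,
  where \<alpha> = -i sin (\<omega> t) / \<omega>, \<beta> = (cos (\<omega> t) - 1) / \<omega> and \<gamma> = (cos (\<omega> t) - 1) / \<omega>^2,
  solves the gadget Schroedinger equation up to residuals of size O(dt) in the |0> and O(sqrt dt) in
  the |1> component. As the gadget Hamiltonian is Hermitian, the error of the ansatz grows at most by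
  the integrated residual (an energy estimate), and \<alpha>, \<beta>, \<gamma> vanish at t = dt = 2 pi / \<omega>.
  This gives O(dt^(3/2)) for the |1> component; feeding it back into the equation for the
  |0> component alone improves the bound there to O(dt^2).
  The residuals contain H_else only through commutators with the gadget terms, so only the at most
  s D terms of H_else meeting the support S of the gadget contribute, and the constant does not
  depend on the number of sites.\<close>

section \<open>Vectors and matrices on a finite index set\<close>

lemma mapply_mmul: "finite I \<Longrightarrow> mapply I (mmul I A B) v = mapply I A (mapply I B v)"
  unfolding mapply_def mmul_def
  by (auto simp: sum_distrib_left sum_distrib_right mult.assoc intro!: ext sum.swap)

lemma mapply_madd: "mapply I (madd A B) v = (\<lambda>x. mapply I A v x + mapply I B v x)"
  unfolding mapply_def madd_def by (auto simp: distrib_right sum.distrib)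

lemma mapply_msmul: "mapply I (msmul c A) v = (\<lambda>x. c * mapply I A v x)"
  unfolding mapply_def msmul_def by (auto simp: sum_distrib_left mult.assoc)

lemma mapply_add: "mapply I A (\<lambda>x. v x + w x) = (\<lambda>x. mapply I A v x + mapply I A w x)"
  unfolding mapply_def by (auto simp: distrib_left sum.distrib)

lemma mapply_diff: "mapply I A (\<lambda>x. v x - w x) = (\<lambda>x. mapply I A v x - mapply I A w x)"
  unfolding mapply_def by (auto simp: right_diff_distrib sum_subtractf)

lemma mapply_scale: "mapply I A (\<lambda>x. c * v x) = (\<lambda>x. c * mapply I A v x)"
  unfolding mapply_def by (auto simp: sum_distrib_left ac_simps)

lemma mapply_sum: "mapply I A (\<lambda>y. \<Sum>j\<in>T. f j y) x = (\<Sum>j\<in>T. mapply I A (f j) x)"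
  unfolding mapply_def by (simp add: sum_distrib_left sum.swap[of _ I])

lemma mapply_sum_matrix: "mapply I (\<lambda>x y. \<Sum>j\<in>T. h j x y) v = (\<lambda>x. \<Sum>j\<in>T. mapply I (h j) v x)"
  unfolding mapply_def by (simp add: sum_distrib_right) (rule ext, rule sum.swap)

lemma mapply_cong: "(\<And>y. y \<in> I \<Longrightarrow> v y = w y) \<Longrightarrow> mapply I A v = mapply I A w"
  unfolding mapply_def by auto

lemma vnorm_L2: "vnorm I v = L2_set (\<lambda>x. cmod (v x)) I"
  unfolding vnorm_def L2_set_def by simp

lemma vnorm_nonneg [simp]: "0 \<le> vnorm I v"
  by (simp add: vnorm_L2)

lemma vnorm_cong: "(\<And>x. x \<in> I \<Longrightarrow> v x = w x) \<Longrightarrow> vnorm I v = vnorm I w"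
  unfolding vnorm_def by simp

lemma vnorm_eq_0: "(\<And>x. x \<in> I \<Longrightarrow> v x = 0) \<Longrightarrow> vnorm I v = 0"
  unfolding vnorm_def by simp

lemma vnorm_add: "vnorm I (\<lambda>x. v x + w x) \<le> vnorm I v + vnorm I w"
proof -
  have "vnorm I (\<lambda>x. v x + w x) \<le> L2_set (\<lambda>x. cmod (v x) + cmod (w x)) I"
    unfolding vnorm_L2 by (rule L2_set_mono) (auto intro: norm_triangle_ineq)
  also have "\<dots> \<le> vnorm I v + vnorm I w"
    unfolding vnorm_L2 by (rule L2_set_triangle_ineq)
  finally show ?thesis .
qed

lemma vnorm_scale: "vnorm I (\<lambda>x. c * v x) = cmod c * vnorm I v"
  unfolding vnorm_L2 by (simp add: norm_mult L2_set_right_distrib)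

lemma vnorm_uminus: "vnorm I (\<lambda>x. - v x) = vnorm I v"
  using vnorm_scale[of I "-1" v] by simp

lemma vnorm_diff: "vnorm I (\<lambda>x. v x - w x) \<le> vnorm I v + vnorm I w"
  using vnorm_add[of I v "\<lambda>x. - w x"] vnorm_uminus[of I w] by simp

lemma vnorm_add4_le: "vnorm I (\<lambda>x. a x + b x + c x + d x) \<le> vnorm I a + vnorm I b + vnorm I c + vnorm I d"
  using vnorm_add[of I "\<lambda>x. a x + b x + c x" d] vnorm_add[of I "\<lambda>x. a x + b x" c] vnorm_add[of I a b]
  by linarith

lemma vnorm_alternating5_le:
  "vnorm I (\<lambda>x. a x - b x - c x + d x - e x) \<le> vnorm I a + vnorm I b + vnorm I c + vnorm I d + vnorm I e"
  using vnorm_diff[of I "\<lambda>x. a x - b x - c x + d x" e] vnorm_add[of I "\<lambda>x. a x - b x - c x" d]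
    vnorm_diff[of I "\<lambda>x. a x - b x" c] vnorm_diff[of I a b]
  by linarith

lemma vnorm_sum: "vnorm I (\<lambda>x. \<Sum>j\<in>T. f j x) \<le> (\<Sum>j\<in>T. vnorm I (f j))"
proof (induction T rule: infinite_finite_induct)
  case (insert j T)
  have "vnorm I (\<lambda>x. \<Sum>j\<in>insert j T. f j x) = vnorm I (\<lambda>x. f j x + (\<Sum>j\<in>T. f j x))"
    using insert by simp
  also have "\<dots> \<le> vnorm I (f j) + vnorm I (\<lambda>x. \<Sum>j\<in>T. f j x)" by (rule vnorm_add)
  finally show ?case using insert by simp
qed (simp_all add: vnorm_eq_0)

lemma abs_le_vnorm: "finite I \<Longrightarrow> x \<in> I \<Longrightarrow> cmod (v x) \<le> vnorm I v"
  unfolding vnorm_L2 L2_set_def by (rule real_le_rsqrt) (auto intro: member_le_sum)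

definition vinner :: "'a set \<Rightarrow> 'a cvec \<Rightarrow> 'a cvec \<Rightarrow> complex" where
  "vinner I v w = (\<Sum>x\<in>I. cnj (v x) * w x)"

lemma vinner_cong: "(\<And>x. x \<in> I \<Longrightarrow> v x = v' x \<and> w x = w' x) \<Longrightarrow> vinner I v w = vinner I v' w'"
  unfolding vinner_def by simp

lemma vinner_cnj_commute: "vinner I v w = cnj (vinner I w v)"
  unfolding vinner_def by (simp add: mult.commute)

lemma vinner_add: "vinner I v (\<lambda>x. w1 x + w2 x) = vinner I v w1 + vinner I v w2"
  unfolding vinner_def by (simp add: distrib_left sum.distrib)

lemma vinner_scale: "vinner I v (\<lambda>x. a * w x) = a * vinner I v w"
  unfolding vinner_def by (simp add: sum_distrib_left ac_simps)

lemma vinner_Cauchy_Schwarz: "cmod (vinner I v w) \<le> vnorm I v * vnorm I w"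
proof -
  have "cmod (vinner I v w) \<le> (\<Sum>x\<in>I. \<bar>cmod (v x)\<bar> * \<bar>cmod (w x)\<bar>)"
    unfolding vinner_def by (rule order_trans[OF norm_sum]) (simp add: norm_mult)
  also have "\<dots> \<le> vnorm I v * vnorm I w" unfolding vnorm_L2 by (rule L2_set_mult_ineq)
  finally show ?thesis .
qed

lemma Re_vinner_le: "Re (vinner I v w) \<le> vnorm I v * vnorm I w"
  using vinner_Cauchy_Schwarz[of I v w] complex_Re_le_cmod[of "vinner I v w"] by linarith

lemma hermitian_vinner:
  assumes "hermitian I A" "finite I"
  shows "vinner I v (mapply I A w) = cnj (vinner I w (mapply I A v))"
proof -
  have "vinner I v (mapply I A w) = (\<Sum>x\<in>I. \<Sum>y\<in>I. cnj (v x) * A x y * w y)"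
    unfolding vinner_def mapply_def by (simp add: sum_distrib_left mult.assoc)
  also have "\<dots> = (\<Sum>y\<in>I. \<Sum>x\<in>I. cnj (v x) * A x y * w y)" by (rule sum.swap)
  also have "\<dots> = (\<Sum>y\<in>I. \<Sum>x\<in>I. cnj (cnj (w y) * A y x * v x))"
  proof (intro sum.cong refl)
    fix x y assume "x \<in> I" "y \<in> I"
    then have "A y x = cnj (A x y)" using assms(1) unfolding hermitian_def by blast
    then show "cnj (v x) * A x y * w y = cnj (cnj (w y) * A y x * v x)" by simp
  qed
  also have "\<dots> = cnj (vinner I w (mapply I A v))"
    unfolding vinner_def mapply_def by (simp add: sum_distrib_left mult.assoc)
  finally show ?thesis .
qed

lemma hermitian_vinner_swap:
  assumes "hermitian I A" "finite I"
  shows "vinner I v (mapply I A w) = vinner I (mapply I A v) w"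
  using hermitian_vinner[OF assms, of v w] vinner_cnj_commute[of I "mapply I A v" w] by simp

lemma hermitian_vinner_real:
  assumes "hermitian I A" "finite I"
  shows "Im (vinner I v (mapply I A v)) = 0"
  using arg_cong[OF hermitian_vinner[OF assms, of v v], of Im] by simp

lemma hermitian_sum:
  assumes "\<And>j. j \<in> T \<Longrightarrow> hermitian I (h j)"
  shows "hermitian I (\<lambda>x y. \<Sum>j\<in>T. h j x y)"
  unfolding hermitian_def
proof (intro ballI)
  fix x y assume "x \<in> I" "y \<in> I"
  have "(\<Sum>j\<in>T. h j y x) = (\<Sum>j\<in>T. cnj (h j x y))"
  proof (rule sum.cong)
    fix j assume "j \<in> T"
    then show "h j y x = cnj (h j x y)" using assms \<open>x \<in> I\<close> \<open>y \<in> I\<close> unfolding hermitian_def by blast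
  qed simp
  then show "(\<Sum>j\<in>T. h j y x) = cnj (\<Sum>j\<in>T. h j x y)" by (simp add: cnj_sum)
qed

definition entry_abs_sum :: "'a set \<Rightarrow> 'a cmat \<Rightarrow> real" where
  "entry_abs_sum J A = (\<Sum>x\<in>J. \<Sum>y\<in>J. cmod (A x y))"

lemma entry_abs_sum_nonneg: "0 \<le> entry_abs_sum J A"
  unfolding entry_abs_sum_def by (auto intro!: sum_nonneg)

lemma vnorm_mapply_le_entry_abs_sum:
  assumes "finite I"
  shows "vnorm I (mapply I A v) \<le> entry_abs_sum I A * vnorm I v"
proof -
  have "vnorm I (mapply I A v) \<le> (\<Sum>x\<in>I. cmod (mapply I A v x))"
    unfolding vnorm_L2 by (rule L2_set_le_sum) auto
  also have "\<dots> \<le> (\<Sum>x\<in>I. \<Sum>y\<in>I. cmod (A x y) * vnorm I v)"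
  proof (rule sum_mono)
    fix x assume "x \<in> I"
    have "cmod (mapply I A v x) \<le> (\<Sum>y\<in>I. cmod (A x y) * cmod (v y))"
      unfolding mapply_def by (rule order_trans[OF norm_sum]) (simp add: norm_mult)
    also have "\<dots> \<le> (\<Sum>y\<in>I. cmod (A x y) * vnorm I v)"
      by (intro sum_mono mult_left_mono abs_le_vnorm assms) auto
    finally show "cmod (mapply I A v x) \<le> (\<Sum>y\<in>I. cmod (A x y) * vnorm I v)" .
  qed
  also have "\<dots> = entry_abs_sum I A * vnorm I v"
    unfolding entry_abs_sum_def by (simp add: sum_distrib_right)
  finally show ?thesis .
qed

lemma vnorm_mapply_le_opnorm:
  assumes "finite I"
  shows "vnorm I (mapply I A v) \<le> opnorm I A * vnorm I v"
proof (cases "vnorm I v = 0")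
  case True
  then have "\<forall>x\<in>I. v x = 0" unfolding vnorm_L2 using L2_set_eq_0_iff[OF assms] by auto
  then have "vnorm I (mapply I A v) = 0" by (intro vnorm_eq_0) (simp add: mapply_def)
  then show ?thesis using True by simp
next
  case False
  then have pos: "vnorm I v > 0" using vnorm_nonneg[of I v] by linarith
  let ?S = "{vnorm I (mapply I A v) | v. vnorm I v \<le> 1}"
  let ?w = "\<lambda>x. complex_of_real (1 / vnorm I v) * v x"
  have "bdd_above ?S"
  proof (rule bdd_aboveI)
    fix r assume "r \<in> ?S"
    then obtain w where "r = vnorm I (mapply I A w)" "vnorm I w \<le> 1" by auto
    then show "r \<le> entry_abs_sum I A"
      using vnorm_mapply_le_entry_abs_sum[OF assms, of A w] entry_abs_sum_nonneg[of I A]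
      by (smt (verit) mult_left_le)
  qed
  moreover have "vnorm I ?w = 1" unfolding vnorm_scale norm_of_real using pos by simp
  then have "vnorm I (mapply I A ?w) \<in> ?S" by force
  ultimately have "vnorm I (mapply I A ?w) \<le> opnorm I A"
    unfolding opnorm_def by (rule cSup_upper[rotated])
  moreover have "vnorm I (mapply I A ?w) = vnorm I (mapply I A v) / vnorm I v"
    unfolding mapply_scale vnorm_scale using pos by (simp add: norm_divide)
  ultimately have "vnorm I v * (vnorm I (mapply I A v) / vnorm I v) \<le> vnorm I v * opnorm I A"
    using pos by (intro mult_left_mono) auto
  then show ?thesis using pos by (simp add: mult.commute)
qed

lemma sum_times_UNIV_bool: "(\<Sum>p\<in>I \<times> (UNIV::bool set). g p) = (\<Sum>y\<in>I. g (y, False) + g (y, True))"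
proof -
  have "(\<Sum>p\<in>I \<times> (UNIV::bool set). g p) = (\<Sum>y\<in>I. \<Sum>b\<in>(UNIV::bool set). g (y, b))"
    using sum.cartesian_product[of "\<lambda>x y. g (x, y)" "UNIV::bool set" I] by (simp add: split_def)
  then show ?thesis by (simp add: UNIV_bool add.commute)
qed

section \<open>The matrix exponential\<close>

lemma mpow_msmul: "mpow I (msmul s A) k = msmul (s ^ k) (mpow I A k)"
  by (induction k) (auto simp: msmul_def mmul_def sum_distrib_left ac_simps intro!: ext)

lemma norm_mpow_le:
  assumes "finite J" "x \<in> J"
  shows "cmod (mpow J A k x y) \<le> entry_abs_sum J A ^ k"
  using assms(2)
proof (induction k arbitrary: x)
  case (Suc k)
  have "cmod (mpow J A (Suc k) x y) \<le> (\<Sum>z\<in>J. cmod (A x z) * cmod (mpow J A k z y))"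
    by (simp add: mmul_def) (metis (no_types, lifting) norm_mult norm_sum sum.cong)
  also have "\<dots> \<le> (\<Sum>z\<in>J. cmod (A x z)) * entry_abs_sum J A ^ k"
    by (simp add: sum_distrib_right) (intro sum_mono mult_left_mono Suc.IH, auto)
  also have "\<dots> \<le> entry_abs_sum J A * entry_abs_sum J A ^ k"
    unfolding entry_abs_sum_def
    by (intro mult_right_mono member_le_sum[of x J "\<lambda>x. \<Sum>y\<in>J. cmod (A x y)", OF Suc.prems])
       (auto intro!: sum_nonneg zero_le_power assms simp: entry_abs_sum_def)
  finally show ?case by simp
qed (simp add: mid_def)

lemma mexp_msmul_powser: "mexp J (msmul z A) x y = (\<Sum>n. (mpow J A n x y / of_nat (fact n)) * z ^ n)"
  unfolding mexp_def mpow_msmul by (simp add: msmul_def ac_simps)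

lemma summable_mexp_powser:
  assumes "finite J" "x \<in> J"
  shows "summable (\<lambda>n. (mpow J A n x y / of_nat (fact n)) * z ^ n)"
proof (rule summable_comparison_test')
  show "summable (\<lambda>n. (entry_abs_sum J A * cmod z) ^ n / fact n)"
    using summable_exp_generic[of "entry_abs_sum J A * cmod z"] by (simp add: divide_inverse ac_simps)
  fix n
  show "norm (mpow J A n x y / of_nat (fact n) * z ^ n) \<le> (entry_abs_sum J A * cmod z) ^ n / fact n"
    using norm_mpow_le[OF assms, of A n y]
    by (auto simp: norm_mult norm_divide norm_power power_mult_distrib divide_simps
             intro!: mult_right_mono)
qed

lemma has_field_derivative_mexp:
  assumes "finite J" "x \<in> J"
  shows "((\<lambda>z. mexp J (msmul z A) x y) has_field_derivative mmul J A (mexp J (msmul z A)) x y) (at z)"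
proof -
  let ?c = "\<lambda>n. mpow J A n x y / of_nat (fact n)"
  let ?s = "\<lambda>w n. (mpow J A n w y / of_nat (fact n)) * z ^ n"
  have "((\<lambda>z. \<Sum>n. ?c n * z^n) has_field_derivative (\<Sum>n. diffs ?c n * z^n)) (at z)"
    by (rule termdiffs_strong_converges_everywhere) (rule summable_mexp_powser[OF assms])
  moreover have "diffs ?c n * z^n = (\<Sum>w\<in>J. A x w * ?s w n)" for n
  proof -
    have "diffs ?c n = of_nat (Suc n) * ((\<Sum>w\<in>J. A x w * mpow J A n w y) / of_nat (fact (Suc n)))"
      by (simp only: diffs_def mpow.simps mmul_def)
    also have "\<dots> = (\<Sum>w\<in>J. A x w * mpow J A n w y) / (of_nat (fact n) :: complex)"
      by (simp only: fact_Suc of_nat_mult) (simp add: field_simps del: of_nat_Suc)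
    finally show ?thesis by (simp add: sum_distrib_left sum_distrib_right sum_divide_distrib ac_simps)
  qed
  moreover have "(\<Sum>n. \<Sum>w\<in>J. A x w * ?s w n) = (\<Sum>w\<in>J. A x w * (\<Sum>n. ?s w n))"
  proof -
    have s: "summable (?s w)" if "w \<in> J" for w using summable_mexp_powser[OF assms(1) that] .
    have "(\<Sum>n. \<Sum>w\<in>J. A x w * ?s w n) = (\<Sum>w\<in>J. \<Sum>n. A x w * ?s w n)"
      by (rule suminf_sum) (intro summable_mult s)
    also have "\<dots> = (\<Sum>w\<in>J. A x w * (\<Sum>n. ?s w n))"
      by (intro sum.cong refl suminf_mult s)
    finally show ?thesis .
  qed
  ultimately show ?thesis by (simp add: mexp_msmul_powser mmul_def)
qed

lemma has_vector_derivative_mexp_apply: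
  assumes "finite J" "x \<in> J"
  shows "((\<lambda>t. mapply J (mexp J (msmul (complex_of_real t) A)) v x) has_vector_derivative
            mapply J A (mapply J (mexp J (msmul (complex_of_real t) A)) v) x) (at t)"
proof -
  have "((\<lambda>t. mapply J (mexp J (msmul (complex_of_real t) A)) v x) has_vector_derivative
          (\<Sum>y\<in>J. mmul J A (mexp J (msmul (complex_of_real t) A)) x y * v y)) (at t)"
    unfolding mapply_def
    by (intro has_vector_derivative_sum has_vector_derivative_mult_left
          has_vector_derivative_real_field has_field_derivative_mexp assms)
  then show ?thesis
    using fun_cong[OF mapply_mmul[OF assms(1)], of A "mexp J (msmul (complex_of_real t) A)" v x]
    by (simp add: mapply_def)
qed

lemma mexp_zero_apply:
  assumes "finite J" "x \<in> J"
  shows "mapply J (mexp J (msmul 0 A)) v x = v x"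
proof -
  have "mexp J (msmul 0 A) x y = mid x y" for y
    unfolding mexp_msmul_powser powser_zero by simp
  then have "mapply J (mexp J (msmul 0 A)) v x = (\<Sum>y\<in>J. if x = y then v y else 0)"
    unfolding mapply_def mid_def by (intro sum.cong) auto
  then show ?thesis using assms by simp
qed

section \<open>Energy estimates\<close>

lemma has_real_derivative_vnorm_sq:
  assumes "finite I" "\<And>x. x \<in> I \<Longrightarrow> ((\<lambda>t. f t x) has_vector_derivative f' x) (at t)"
  shows "((\<lambda>t. (vnorm I (f t))\<^sup>2) has_real_derivative 2 * Re (vinner I (f t) f')) (at t)"
proof -
  have eq: "(\<lambda>t. (vnorm I (f t))\<^sup>2) = (\<lambda>t. Re (\<Sum>x\<in>I. cnj (f t x) * f t x))"
  proof (intro ext)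
    fix t
    have "(vnorm I (f t))\<^sup>2 = (\<Sum>x\<in>I. (cmod (f t x))\<^sup>2)" unfolding vnorm_def by (simp add: sum_nonneg)
    also have "\<dots> = (\<Sum>x\<in>I. Re (cnj (f t x) * f t x))"
      by (intro sum.cong refl, subst cmod_power2) (simp add: power2_eq_square)
    finally show "(vnorm I (f t))\<^sup>2 = Re (\<Sum>x\<in>I. cnj (f t x) * f t x)" by (simp add: Re_sum)
  qed
  have "((\<lambda>t. \<Sum>x\<in>I. cnj (f t x) * f t x) has_vector_derivative
         (\<Sum>x\<in>I. cnj (f t x) * f' x + cnj (f' x) * f t x)) (at t)"
    by (intro has_vector_derivative_sum has_vector_derivative_mult has_vector_derivative_cnj assms)
  from bounded_linear.has_vector_derivative[OF bounded_linear_Re this]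
  show ?thesis
    unfolding eq has_real_derivative_iff_has_vector_derivative vinner_def
    by (simp add: Re_sum sum.distrib algebra_simps)
qed

text \<open>The proof works with sqrt (q + e^2) for e > 0, as sqrt is not differentiable where q vanishes.\<close>

lemma sqrt_le_of_energy_growth:
  fixes q q' :: "real \<Rightarrow> real"
  assumes T: "0 \<le> T" and K: "0 \<le> K"
    and d: "\<And>t. 0 \<le> t \<Longrightarrow> t \<le> T \<Longrightarrow> (q has_real_derivative q' t) (at t)"
    and q0: "q 0 = 0" and q_nonneg: "\<And>t. 0 \<le> t \<Longrightarrow> t \<le> T \<Longrightarrow> 0 \<le> q t"
    and growth: "\<And>t. 0 \<le> t \<Longrightarrow> t \<le> T \<Longrightarrow> q' t \<le> 2 * sqrt (q t) * K"
  shows "sqrt (q T) \<le> T * K"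
proof (rule field_le_epsilon)
  fix e :: real assume "e > 0"
  define g where "g t = sqrt (q t + e\<^sup>2) - t * K" for t
  have "g T \<le> g 0"
  proof (rule DERIV_nonpos_imp_nonincreasing[OF T])
    fix t assume t: "0 \<le> t" "t \<le> T"
    have pos: "q t + e\<^sup>2 > 0" using q_nonneg[OF t] \<open>e > 0\<close> by (simp add: add_nonneg_pos)
    let ?r = "inverse (sqrt (q t + e\<^sup>2)) / 2"
    have "((\<lambda>t. sqrt (q t + e\<^sup>2)) has_real_derivative ?r * q' t) (at t)"
      by (rule DERIV_chain2[of sqrt ?r "\<lambda>t. q t + e\<^sup>2", OF DERIV_real_sqrt[OF pos]])
         (use DERIV_add[OF d[OF t] DERIV_const[of "e\<^sup>2"]] in simp)
    then have "(g has_real_derivative ?r * q' t - K) (at t)"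
      unfolding g_def by (rule DERIV_diff) (use DERIV_cmult_right[OF DERIV_ident, of K t] in simp)
    moreover have "?r * q' t - K \<le> 0"
    proof -
      have "?r * q' t \<le> ?r * (2 * sqrt (q t) * K)"
        using growth[OF t] pos by (intro mult_left_mono) auto
      moreover have "?r * (2 * sqrt (q t) * K) = sqrt (q t) / sqrt (q t + e\<^sup>2) * K"
        using pos by (simp add: field_simps)
      moreover have "sqrt (q t) / sqrt (q t + e\<^sup>2) * K \<le> K"
        using pos K q_nonneg[OF t] by (intro mult_left_le_one_le) (auto simp: divide_le_eq)
      ultimately show ?thesis by linarith
    qed
    ultimately show "\<exists>y. (g has_real_derivative y) (at t) \<and> y \<le> 0" by blast
  qed
  then have "sqrt (q T + e\<^sup>2) \<le> e + T * K" unfolding g_def q0 using \<open>e > 0\<close> by simp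
  moreover have "sqrt (q T) \<le> sqrt (q T + e\<^sup>2)" by simp
  ultimately show "sqrt (q T) \<le> T * K + e" by linarith
qed

lemma vnorm_le_of_energy_growth:
  assumes "finite I" "0 \<le> T" "0 \<le> K"
    and "\<And>t x. x \<in> I \<Longrightarrow> ((\<lambda>t. e t x) has_vector_derivative e' t x) (at t)"
    and "\<And>x. x \<in> I \<Longrightarrow> e 0 x = 0"
    and "\<And>t. 0 \<le> t \<Longrightarrow> t \<le> T \<Longrightarrow> Re (vinner I (e t) (e' t)) \<le> vnorm I (e t) * K"
  shows "vnorm I (e T) \<le> T * K"
  using sqrt_le_of_energy_growth[of T K "\<lambda>t. (vnorm I (e t))\<^sup>2" "\<lambda>t. 2 * Re (vinner I (e t) (e' t))"]
    has_real_derivative_vnorm_sq[OF assms(1,4)] vnorm_eq_0[of I "e 0"] assms(2,3,5,6)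
  by (auto simp: mult.commute)

section \<open>Locality\<close>

lemma finite_configs: "finite (configs n d)"
proof -
  let ?E = "\<lambda>f::nat \<Rightarrow> nat. \<lambda>i. if i < n then f i else 0"
  have "configs n d \<subseteq> ?E ` (PiE {..<n} (\<lambda>i. {..<d i}))"
  proof
    fix x assume x: "x \<in> configs n d"
    have "restrict x {..<n} \<in> PiE {..<n} (\<lambda>i. {..<d i})" using x by (auto simp: configs_def)
    moreover have "x = ?E (restrict x {..<n})" using x by (auto simp: configs_def)
    ultimately show "x \<in> ?E ` (PiE {..<n} (\<lambda>i. {..<d i}))" by blast
  qed
  moreover have "finite (?E ` (PiE {..<n} (\<lambda>i. {..<d i})))" by (intro finite_imageI finite_PiE) auto
  ultimately show ?thesis by (rule finite_subset)
qed

definition restrict_sites :: "nat set \<Rightarrow> (nat \<Rightarrow> nat) \<Rightarrow> nat \<Rightarrow> nat" where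
  "restrict_sites S x = (\<lambda>i. if i \<in> S then x i else 0)"

lemma acts_on_iff:
  "acts_on n d S A \<longleftrightarrow> (\<exists>B. \<forall>x\<in>configs n d. \<forall>y\<in>configs n d.
     A x y = (if \<forall>i<n. i \<notin> S \<longrightarrow> x i = y i
              then B (restrict_sites S x) (restrict_sites S y) else 0))"
  unfolding acts_on_def restrict_sites_def ..

text \<open>In the product of operators acting on disjoint site sets, only the intermediate
  configuration that agrees with y on A and with x elsewhere contributes.\<close>

lemma sum_mult_disjoint_local:
  fixes n :: nat and d :: "nat \<Rightarrow> nat" and P :: "(nat \<Rightarrow> nat) cmat" and A BP
    and Q :: "(nat \<Rightarrow> nat) cmat" and B BQ x y
  defines "C \<equiv> configs n d"
  assumes P: "\<And>x y. x \<in> C \<Longrightarrow> y \<in> C \<Longrightarrow> P x y = (if \<forall>i<n. i \<notin> A \<longrightarrow> x i = y i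
              then BP (restrict_sites A x) (restrict_sites A y) else 0)"
    and Q: "\<And>x y. x \<in> C \<Longrightarrow> y \<in> C \<Longrightarrow> Q x y = (if \<forall>i<n. i \<notin> B \<longrightarrow> x i = y i
              then BQ (restrict_sites B x) (restrict_sites B y) else 0)"
    and disj: "A \<inter> B = {}" and x: "x \<in> C" and y: "y \<in> C"
  shows "(\<Sum>z\<in>C. P x z * Q z y) = (if \<forall>i<n. i \<notin> A \<longrightarrow> i \<notin> B \<longrightarrow> x i = y i
     then BP (restrict_sites A x) (restrict_sites A y) * BQ (restrict_sites B x) (restrict_sites B y)
     else 0)"
proof -
  define m where "m = (\<lambda>i. if i \<in> A then y i else x i)"
  have m: "m \<in> C" using x y unfolding m_def C_def configs_def by auto
  have "P x z * Q z y = 0" if z: "z \<in> C" "z \<noteq> m" for z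
  proof -
    obtain i where i: "z i \<noteq> m i" using z(2) by blast
    have "i < n"
      using z(1) x y i unfolding C_def configs_def m_def by (cases "i < n") (auto simp: not_less split: if_splits)
    then show ?thesis
      using P[OF x z(1)] Q[OF z(1) y] disj i unfolding m_def by (cases "i \<in> A") auto
  qed
  then have "(\<Sum>z\<in>C - {m}. P x z * Q z y) = 0" by (intro sum.neutral) auto
  then have "(\<Sum>z\<in>C. P x z * Q z y) = P x m * Q m y"
    using sum.remove[OF _ m, of "\<lambda>z. P x z * Q z y"] finite_configs[of n d] unfolding C_def by simp
  also have "P x m = BP (restrict_sites A x) (restrict_sites A y)"
  proof -
    have "restrict_sites A m = restrict_sites A y" unfolding m_def restrict_sites_def by auto
    moreover have "\<forall>i<n. i \<notin> A \<longrightarrow> x i = m i" unfolding m_def by simp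
    ultimately show ?thesis unfolding P[OF x m] by simp
  qed
  also have "Q m y = (if \<forall>i<n. i \<notin> A \<longrightarrow> i \<notin> B \<longrightarrow> x i = y i
     then BQ (restrict_sites B x) (restrict_sites B y) else 0)"
  proof -
    have r: "restrict_sites B m = restrict_sites B x"
      using disj unfolding m_def restrict_sites_def by (auto intro!: ext)
    have c: "(\<forall>i<n. i \<notin> B \<longrightarrow> m i = y i) = (\<forall>i<n. i \<notin> A \<longrightarrow> i \<notin> B \<longrightarrow> x i = y i)"
      using disj unfolding m_def by auto
    show ?thesis unfolding Q[OF m y] r c ..
  qed
  finally show ?thesis
    by (simp only: if_distrib[of "\<lambda>q. BP (restrict_sites A x) (restrict_sites A y) * q"] mult_zero_right)
qed

lemma acts_on_disjoint_commute:
  assumes "acts_on n d A P" "acts_on n d B Q" "A \<inter> B = {}" "x \<in> configs n d"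
  shows "mapply (configs n d) P (mapply (configs n d) Q v) x
       = mapply (configs n d) Q (mapply (configs n d) P v) x"
proof -
  let ?C = "configs n d"
  obtain BP BQ where
    BP: "\<forall>x\<in>?C. \<forall>y\<in>?C. P x y = (if \<forall>i<n. i \<notin> A \<longrightarrow> x i = y i
           then BP (restrict_sites A x) (restrict_sites A y) else 0)" and
    BQ: "\<forall>x\<in>?C. \<forall>y\<in>?C. Q x y = (if \<forall>i<n. i \<notin> B \<longrightarrow> x i = y i
           then BQ (restrict_sites B x) (restrict_sites B y) else 0)"
    using assms(1,2) unfolding acts_on_iff by blast
  have "mmul ?C P Q x y = mmul ?C Q P x y" if "y \<in> ?C" for y
    using sum_mult_disjoint_local[of n d P A BP Q B BQ x y]
      sum_mult_disjoint_local[of n d Q B BQ P A BP x y] BP BQ assms(3,4) that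
    unfolding mmul_def by (auto simp: Int_commute mult.commute)
  then have "mapply ?C (mmul ?C P Q) v x = mapply ?C (mmul ?C Q P) v x"
    unfolding mapply_def by (intro sum.cong) auto
  then show ?thesis by (simp add: mapply_mmul[OF finite_configs])
qed

lemma acts_on_disjoint_sum_commute:
  assumes "\<And>j. j \<in> T \<Longrightarrow> acts_on n d (supp j) (h j) \<and> supp j \<inter> S = {}"
    and "acts_on n d S A" "x \<in> configs n d"
  shows "mapply (configs n d) (\<lambda>x y. \<Sum>j\<in>T. h j x y) (mapply (configs n d) A v) x
       = mapply (configs n d) A (mapply (configs n d) (\<lambda>x y. \<Sum>j\<in>T. h j x y) v) x"
  unfolding mapply_sum_matrix mapply_sum
proof (rule sum.cong[OF refl])
  fix j assume "j \<in> T"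
  then show "mapply (configs n d) (h j) (mapply (configs n d) A v) x
           = mapply (configs n d) A (mapply (configs n d) (h j) v) x"
    using assms by (intro acts_on_disjoint_commute) auto
qed

lemma card_terms_meeting_le:
  fixes n :: nat
  assumes "finite T" "S \<subseteq> {..<n}" "\<And>i. i < n \<Longrightarrow> card {j\<in>T. i \<in> supp j} \<le> D"
  shows "card {j\<in>T. supp j \<inter> S \<noteq> {}} \<le> card S * D"
proof -
  have sub: "{j\<in>T. supp j \<inter> S \<noteq> {}} \<subseteq> (\<Union>i\<in>S. {j\<in>T. i \<in> supp j})" by blast
  have fin: "finite (\<Union>i\<in>S. {j\<in>T. i \<in> supp j})" by (rule finite_subset[OF _ assms(1)]) blast
  have "card {j\<in>T. supp j \<inter> S \<noteq> {}} \<le> card (\<Union>i\<in>S. {j\<in>T. i \<in> supp j})"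
    by (rule card_mono[OF fin sub])
  also have "\<dots> \<le> (\<Sum>i\<in>S. card {j\<in>T. i \<in> supp j})"
    by (intro card_UN_le finite_subset[OF assms(2)]) simp
  also have "\<dots> \<le> (\<Sum>i\<in>S. D)" using assms(2,3) by (intro sum_mono) auto
  finally show ?thesis by simp
qed

lemma vnorm_mapply_sum_le:
  fixes c :: real
  assumes "finite I" "\<And>j. j \<in> T \<Longrightarrow> opnorm I (h j) \<le> c"
  shows "vnorm I (mapply I (\<lambda>x y. \<Sum>j\<in>T. h j x y) v) \<le> card T * c * vnorm I v"
proof -
  have "vnorm I (mapply I (\<lambda>x y. \<Sum>j\<in>T. h j x y) v) \<le> (\<Sum>j\<in>T. vnorm I (mapply I (h j) v))"
    unfolding mapply_sum_matrix by (rule vnorm_sum)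
  also have "\<dots> \<le> (\<Sum>j\<in>T. c * vnorm I v)"
    using assms vnorm_mapply_le_opnorm[OF assms(1)] by (intro sum_mono) (meson mult_right_mono order_trans vnorm_nonneg)
  finally show ?thesis by simp
qed

section \<open>The gadget\<close>

definition bracket_const :: "real \<Rightarrow> real \<Rightarrow> real" where
  "bracket_const c lc = 2 * c + c ^ 3 + 2 * lc"

definition residual0_const :: "real \<Rightarrow> real \<Rightarrow> real" where
  "residual0_const c lc = (c ^ 3 + c ^ 2) * bracket_const c lc"

definition residual1_const :: "real \<Rightarrow> real \<Rightarrow> real" where
  "residual1_const c lc = (c ^ 2 + c) * bracket_const c lc + c ^ 4 + c ^ 3"

definition gadget_const :: "real \<Rightarrow> real \<Rightarrow> real" where
  "gadget_const c lc = (c + 1) * (residual0_const c lc + residual1_const c lc) + residual0_const c lc + 1"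

lemma residual_consts_nonneg:
  assumes "0 \<le> c" "0 \<le> lc"
  shows "0 \<le> residual0_const c lc" "0 \<le> residual1_const c lc"
  using assms by (simp_all add: residual0_const_def residual1_const_def bracket_const_def)

lemma gadget_const_pos: "0 \<le> c \<Longrightarrow> 0 \<le> lc \<Longrightarrow> 0 < gadget_const c lc"
  using residual_consts_nonneg[of c lc] unfolding gadget_const_def
  by (simp add: add_nonneg_pos)

text \<open>The terms of H_else are split into the part L meeting the sites of the gadget, whose norm lc
  is controlled by the degree bound, and the part F acting on the other sites, which commutes with
  the gadget and therefore drops out of all error terms.\<close>

locale ancilla_gadget =
  fixes I :: "'a set" and HI HX H1 Helse L F :: "'a cmat" and dt c lc :: real and psi :: "'a cvec"
  assumes finite_I: "finite I"
    and herm_HI: "hermitian I HI" and herm_HX: "hermitian I HX" and herm_H1: "hermitian I H1"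
    and herm_Helse: "hermitian I Helse"
    and dt_pos: "0 < dt" and dt_less_1: "dt < 1" and c_nonneg: "0 \<le> c" and lc_nonneg: "0 \<le> lc"
    and opnorm_HI: "opnorm I HI \<le> c"
    and opnorm_HX: "opnorm I HX \<le> c * dt powr (-1/2)"
    and opnorm_H1: "opnorm I H1 \<le> c / dt"
    and H1_square: "mat_eq_on I (mmul I H1 H1) (msmul (complex_of_real ((2 * pi / dt)\<^sup>2)) mid)"
    and Helse_split: "Helse = madd L F"
    and L_bound: "\<And>v. vnorm I (mapply I L v) \<le> lc * vnorm I v"
    and F_commute: "\<And>M v x. M \<in> {HI, HX, H1} \<Longrightarrow> x \<in> I \<Longrightarrow>
                      mapply I F (mapply I M v) x = mapply I M (mapply I F v) x"
begin

text \<open>Cutting mapply off outside I turns identities between vectors on I into equalities of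
  functions, which the simplifier can use for rewriting.\<close>

definition act :: "'a cmat \<Rightarrow> 'a cvec \<Rightarrow> 'a cvec" where
  "act M v = (\<lambda>x. if x \<in> I then mapply I M v x else 0)"

lemma act_add: "act M (\<lambda>x. v x + w x) = (\<lambda>x. act M v x + act M w x)"
  unfolding act_def mapply_add by auto

lemma act_diff: "act M (\<lambda>x. v x - w x) = (\<lambda>x. act M v x - act M w x)"
  unfolding act_def mapply_diff by auto

lemma act_scale: "act M (\<lambda>x. a * v x) = (\<lambda>x. a * act M v x)"
  unfolding act_def mapply_scale by auto

lemma act_in: "x \<in> I \<Longrightarrow> act M v x = mapply I M v x"
  unfolding act_def by simp

lemma act_act: "act M (act N v) = act M (mapply I N v)"
  unfolding act_def using mapply_cong[of I "act N v" "mapply I N v" M] by (auto simp: act_def)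

lemma vnorm_act: "vnorm I (act M v) = vnorm I (mapply I M v)"
  by (rule vnorm_cong) (simp add: act_in)

lemma vinner_act: "vinner I v (act M w) = vinner I v (mapply I M w)"
  by (rule vinner_cong) (simp add: act_in)

lemma act_Helse: "act Helse v = (\<lambda>x. act L v x + act F v x)"
  unfolding act_def Helse_split mapply_madd by auto

lemma act_F_commute:
  "act F (act HI v) = act HI (act F v)" "act F (act HX v) = act HX (act F v)"
  "act F (act H1 v) = act H1 (act F v)"
  unfolding act_act by (auto simp: act_def F_commute intro!: ext mapply_cong)

lemma Re_vinner_act_skew:
  assumes "hermitian I A"
  shows "Re (vinner I v (\<lambda>x. - \<i> * act A w x)) + Re (vinner I w (\<lambda>x. - \<i> * act A v x)) = 0"
  using hermitian_vinner[OF assms finite_I, of v w] unfolding vinner_scale vinner_act by simp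

lemma Re_vinner_act_skew_diag:
  assumes "hermitian I A"
  shows "Re (vinner I v (\<lambda>x. - \<i> * act A v x)) = 0"
  using Re_vinner_act_skew[OF assms, of v v] by simp

lemma vinner_act_act_real:
  assumes "hermitian I A" "hermitian I B"
  shows "Im (vinner I v (act A (act B (act A v)))) = 0"
proof -
  have "vinner I v (act A (act B (act A v))) = vinner I (mapply I A v) (mapply I B (act A v))"
    using hermitian_vinner_swap[OF assms(1) finite_I] by (simp add: act_act act_def vinner_def)
  also have "\<dots> = vinner I (act A v) (mapply I B (act A v))"
    by (rule vinner_cong) (simp add: act_in)
  finally show ?thesis using hermitian_vinner_real[OF assms(2) finite_I] by simp
qed

definition \<omega> :: real where "\<omega> = 2 * pi / dt"

lemma \<omega>_pos: "0 < \<omega>"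
  unfolding \<omega>_def using dt_pos by simp

lemma \<omega>_dt: "\<omega> * dt = 2 * pi"
  unfolding \<omega>_def using dt_pos by simp

lemma act_H1_H1: "act H1 (act H1 (act M v)) = (\<lambda>x. complex_of_real (\<omega>\<^sup>2) * act M v x)"
proof (rule ext)
  fix x
  show "act H1 (act H1 (act M v)) x = complex_of_real (\<omega>\<^sup>2) * act M v x"
  proof (cases "x \<in> I")
    case True
    have "act H1 (act H1 (act M v)) x = mapply I (mmul I H1 H1) (mapply I M v) x"
      using True unfolding act_act by (simp add: act_in mapply_mmul finite_I)
    also have "\<dots> = (\<Sum>y\<in>I. if x = y then complex_of_real (\<omega>\<^sup>2) * mapply I M v y else 0)"
      unfolding mapply_def using H1_square True
      by (intro sum.cong refl) (auto simp: mat_eq_on_def msmul_def mid_def \<omega>_def)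
    finally show ?thesis using True finite_I by (simp add: act_in)
  qed (simp add: act_def)
qed

definition bounded_by :: "('a cvec \<Rightarrow> 'a cvec) \<Rightarrow> real \<Rightarrow> bool" where
  "bounded_by f a \<longleftrightarrow> 0 \<le> a \<and> (\<forall>v. vnorm I (f v) \<le> a * vnorm I v)"

lemma bounded_byD: "bounded_by f a \<Longrightarrow> vnorm I (f v) \<le> a * vnorm I v"
  unfolding bounded_by_def by blast

lemma bounded_by_nonneg: "bounded_by f a \<Longrightarrow> 0 \<le> a"
  unfolding bounded_by_def by blast

lemma bounded_by_comp:
  assumes f: "bounded_by f a" and g: "bounded_by g b"
  shows "bounded_by (\<lambda>v. f (g v)) (a * b)"
proof -
  have "vnorm I (f (g v)) \<le> (a * b) * vnorm I v" for v
  proof -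
    have "vnorm I (f (g v)) \<le> a * vnorm I (g v)" using f by (rule bounded_byD)
    also have "\<dots> \<le> a * (b * vnorm I v)"
      using f g by (intro mult_left_mono bounded_byD bounded_by_nonneg)
    finally show ?thesis by (simp add: mult.assoc)
  qed
  then show ?thesis using f g unfolding bounded_by_def by auto
qed

lemma bounded_by_mono: "bounded_by f a \<Longrightarrow> a \<le> b \<Longrightarrow> bounded_by f b"
  unfolding bounded_by_def by (smt (verit) mult_right_mono vnorm_nonneg)

lemma bounded_by_scale:
  "bounded_by f a \<Longrightarrow> bounded_by (\<lambda>v x. complex_of_real s * f v x) (\<bar>s\<bar> * a)"
  unfolding bounded_by_def by (auto simp: vnorm_scale mult.assoc intro: mult_left_mono)

lemma bounded_by_act: "opnorm I M \<le> a \<Longrightarrow> 0 \<le> a \<Longrightarrow> bounded_by (act M) a"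
  unfolding bounded_by_def vnorm_act
  by (meson mult_right_mono order_trans vnorm_mapply_le_opnorm[OF finite_I] vnorm_nonneg)

lemma bounded_by_HI: "bounded_by (act HI) c"
  using opnorm_HI c_nonneg by (rule bounded_by_act)

lemma bounded_by_HX: "bounded_by (act HX) (c / sqrt dt)"
  using opnorm_HX c_nonneg dt_pos
  by (intro bounded_by_act) (simp_all add: powr_minus_divide powr_half_sqrt)

lemma bounded_by_H1: "bounded_by (act H1) (c / dt)"
  using opnorm_H1 c_nonneg dt_pos by (intro bounded_by_act) simp_all

lemma bounded_by_L: "bounded_by (act L) lc"
  unfolding bounded_by_def vnorm_act using L_bound lc_nonneg by blast

definition XHX :: "'a cvec \<Rightarrow> 'a cvec" where
  "XHX v = (\<lambda>x. complex_of_real (1 / \<omega>\<^sup>2) * act HX (act H1 (act HX v)) x)"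

definition XX :: "'a cvec \<Rightarrow> 'a cvec" where
  "XX v = (\<lambda>x. complex_of_real (1 / \<omega>) * act HX (act HX v) x)"

lemma one_le_pi: "1 \<le> pi"
  using pi_gt3 by simp

lemma bounded_by_XHX: "bounded_by XHX (c ^ 3)"
proof -
  have "bounded_by (\<lambda>v. act HX (act H1 (act HX v))) (c / sqrt dt * (c / dt * (c / sqrt dt)))"
    by (intro bounded_by_comp bounded_by_HX bounded_by_H1)
  from bounded_by_scale[OF this, of "1 / \<omega>\<^sup>2"]
  have "bounded_by XHX (c ^ 3 / (4 * pi\<^sup>2))"
    unfolding XHX_def using dt_pos
    by (simp add: \<omega>_def field_simps power2_eq_square power3_eq_cube)
  moreover have "c ^ 3 / (4 * pi\<^sup>2) \<le> c ^ 3"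
  proof -
    have "1 \<le> 4 * pi\<^sup>2" using mult_mono[OF one_le_pi one_le_pi] by (simp add: power2_eq_square)
    from mult_left_mono[OF this, of "c ^ 3"] show ?thesis using c_nonneg by (simp add: divide_le_eq)
  qed
  ultimately show ?thesis by (rule bounded_by_mono)
qed

lemma bounded_by_XX: "bounded_by XX (c ^ 2)"
proof -
  have "bounded_by (\<lambda>v. act HX (act HX v)) (c / sqrt dt * (c / sqrt dt))"
    by (intro bounded_by_comp bounded_by_HX)
  from bounded_by_scale[OF this, of "1 / \<omega>"]
  have "bounded_by XX (c ^ 2 / (2 * pi))"
    unfolding XX_def using dt_pos by (simp add: \<omega>_def field_simps power2_eq_square)
  moreover have "c ^ 2 / (2 * pi) \<le> c ^ 2"
  proof -
    have "1 \<le> 2 * pi" using one_le_pi by simp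
    from mult_left_mono[OF this, of "c ^ 2"] show ?thesis by (simp add: divide_le_eq)
  qed
  ultimately show ?thesis by (rule bounded_by_mono)
qed

definition \<alpha> :: "real \<Rightarrow> complex" where "\<alpha> t = - \<i> * complex_of_real (sin (\<omega> * t) / \<omega>)"
definition \<beta> :: "real \<Rightarrow> complex" where "\<beta> t = complex_of_real ((cos (\<omega> * t) - 1) / \<omega>)"
definition \<gamma> :: "real \<Rightarrow> complex" where "\<gamma> t = complex_of_real ((cos (\<omega> * t) - 1) / \<omega>\<^sup>2)"

lemma coefficients_at_0: "\<alpha> 0 = 0" "\<beta> 0 = 0" "\<gamma> 0 = 0"
  unfolding \<alpha>_def \<beta>_def \<gamma>_def by simp_all

lemma coefficients_at_dt: "\<alpha> dt = 0" "\<beta> dt = 0" "\<gamma> dt = 0"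
  unfolding \<alpha>_def \<beta>_def \<gamma>_def \<omega>_dt by simp_all

lemma has_vector_derivative_\<alpha>: "(\<alpha> has_vector_derivative - \<i> * complex_of_real (cos (\<omega> * t))) (at t)"
proof -
  have "((\<lambda>t. sin (\<omega> * t) / \<omega>) has_real_derivative cos (\<omega> * t)) (at t)"
    using \<omega>_pos by (auto intro!: derivative_eq_intros)
  from has_vector_derivative_mult_right[OF has_vector_derivative_of_real[OF this], of "- \<i>"]
  show ?thesis unfolding \<alpha>_def[abs_def] by simp
qed

lemma has_vector_derivative_\<beta>: "(\<beta> has_vector_derivative - complex_of_real (sin (\<omega> * t))) (at t)"
proof -
  have "((\<lambda>t. (cos (\<omega> * t) - 1) / \<omega>) has_real_derivative - sin (\<omega> * t)) (at t)"
    using \<omega>_pos by (auto intro!: derivative_eq_intros)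
  then show ?thesis
    unfolding \<beta>_def[abs_def] of_real_minus[symmetric] by (rule has_vector_derivative_of_real)
qed

lemma has_vector_derivative_\<gamma>: "(\<gamma> has_vector_derivative - complex_of_real (sin (\<omega> * t) / \<omega>)) (at t)"
proof -
  have "((\<lambda>t. (cos (\<omega> * t) - 1) / \<omega>\<^sup>2) has_real_derivative - (sin (\<omega> * t) / \<omega>)) (at t)"
    using \<omega>_pos by (auto intro!: derivative_eq_intros simp: power2_eq_square)
  then show ?thesis
    unfolding \<gamma>_def[abs_def] of_real_minus[symmetric] by (rule has_vector_derivative_of_real)
qed

lemma norm_\<alpha>_le: "cmod (\<alpha> t) \<le> dt"
proof -
  have "cmod (\<alpha> t) \<le> 1 / \<omega>"
    unfolding \<alpha>_def norm_mult norm_minus_cancel norm_of_real using \<omega>_pos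
    by (simp add: abs_divide divide_right_mono)
  also have "\<dots> \<le> dt" unfolding \<omega>_def using dt_pos one_le_pi by (simp add: divide_le_eq)
  finally show ?thesis .
qed

lemma norm_\<beta>_le: "cmod (\<beta> t) \<le> dt"
proof -
  have "cmod (\<beta> t) \<le> 2 / \<omega>"
    unfolding \<beta>_def norm_of_real using \<omega>_pos
    by (simp add: abs_divide divide_right_mono abs_le_iff)
  also have "\<dots> \<le> dt" unfolding \<omega>_def using dt_pos one_le_pi by (simp add: divide_le_eq)
  finally show ?thesis .
qed

lemma norm_\<gamma>_le: "cmod (\<gamma> t) \<le> dt\<^sup>2"
proof -
  have "cmod (\<gamma> t) \<le> 2 / \<omega>\<^sup>2"
    unfolding \<gamma>_def norm_of_real using \<omega>_pos
    by (simp add: abs_divide divide_right_mono abs_le_iff)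
  also have "\<dots> = dt\<^sup>2 / (2 * pi\<^sup>2)" unfolding \<omega>_def by (simp add: power2_eq_square)
  also have "\<dots> \<le> dt\<^sup>2"
  proof -
    have "1 \<le> 2 * pi\<^sup>2" using mult_mono[OF one_le_pi one_le_pi] by (simp add: power2_eq_square)
    from mult_left_mono[OF this, of "dt\<^sup>2"] show ?thesis by (simp add: divide_le_eq)
  qed
  finally show ?thesis .
qed

definition Heff :: "'a cmat" where
  "Heff = madd HI (msmul (- complex_of_real (1 / \<omega>\<^sup>2)) (mmul I (mmul I HX H1) HX))"

definition G :: "('a \<times> bool) cmat" where
  "G = madd (madd (kron HI mid) (madd (kron HX pauliX) (kron H1 proj1))) (kron Helse mid)"

definition \<phi> :: "real \<Rightarrow> 'a cvec" where
  "\<phi> t = mapply I (mexp I (msmul (- \<i> * complex_of_real t) (madd Heff Helse))) psi"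

definition u :: "real \<Rightarrow> ('a \<times> bool) cvec" where
  "u t = mapply (I \<times> UNIV) (mexp (I \<times> UNIV) (msmul (- \<i> * complex_of_real t) G)) (tensor_ket0 psi)"

definition u0 :: "real \<Rightarrow> 'a cvec" where "u0 t = (\<lambda>x. u t (x, False))"
definition u1 :: "real \<Rightarrow> 'a cvec" where "u1 t = (\<lambda>x. u t (x, True))"

lemma msmul_minus_i: "msmul (- \<i> * complex_of_real t) A = msmul (complex_of_real t) (msmul (- \<i>) A)"
  unfolding msmul_def by (auto intro!: ext)

lemma \<phi>_at_0: "x \<in> I \<Longrightarrow> \<phi> 0 x = psi x"
  unfolding \<phi>_def using mexp_zero_apply[OF finite_I] by simp

lemma u_at_0: "x \<in> I \<Longrightarrow> u 0 (x, b) = tensor_ket0 psi (x, b)"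
  unfolding u_def using mexp_zero_apply[of "I \<times> UNIV" "(x, b)"] finite_I by simp

definition dphi :: "real \<Rightarrow> 'a cvec" where
  "dphi t = (\<lambda>x. - \<i> * act HI (\<phi> t) x + \<i> * XHX (\<phi> t) x + - \<i> * act Helse (\<phi> t) x)"

lemma has_vector_derivative_\<phi>:
  assumes x: "x \<in> I"
  shows "((\<lambda>t. \<phi> t x) has_vector_derivative dphi t x) (at t)"
proof -
  have "((\<lambda>t. \<phi> t x) has_vector_derivative mapply I (msmul (- \<i>) (madd Heff Helse)) (\<phi> t) x) (at t)"
    unfolding \<phi>_def msmul_minus_i by (rule has_vector_derivative_mexp_apply[OF finite_I x])
  moreover have "mapply I (mmul I (mmul I HX H1) HX) w x = act HX (act H1 (act HX w)) x" for w
    unfolding act_act using x by (simp add: act_in mapply_mmul finite_I)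
  ultimately show ?thesis
    using x by (simp add: mapply_msmul mapply_madd Heff_def XHX_def dphi_def act_in algebra_simps)
qed

lemma mapply_G:
  "mapply (I \<times> UNIV) G w (x, False) =
     mapply I HI (\<lambda>y. w (y, False)) x + mapply I HX (\<lambda>y. w (y, True)) x
     + mapply I Helse (\<lambda>y. w (y, False)) x"
  "mapply (I \<times> UNIV) G w (x, True) =
     mapply I HI (\<lambda>y. w (y, True)) x + mapply I HX (\<lambda>y. w (y, False)) x
     + mapply I H1 (\<lambda>y. w (y, True)) x + mapply I Helse (\<lambda>y. w (y, True)) x"
  unfolding mapply_def sum_times_UNIV_bool G_def madd_def kron_def mid_def pauliX_def proj1_def
  by (simp_all add: sum.distrib algebra_simps)

lemma has_vector_derivative_u:
  assumes "x \<in> I"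
  shows "((\<lambda>t. u0 t x) has_vector_derivative
           - \<i> * (act HI (u0 t) x + act HX (u1 t) x + act Helse (u0 t) x)) (at t)"
    and "((\<lambda>t. u1 t x) has_vector_derivative
           - \<i> * (act HI (u1 t) x + act HX (u0 t) x + act H1 (u1 t) x + act Helse (u1 t) x)) (at t)"
proof -
  have "((\<lambda>t. u t (x, b)) has_vector_derivative - \<i> * mapply (I \<times> UNIV) G (u t) (x, b)) (at t)" for b
    using has_vector_derivative_mexp_apply[of "I \<times> UNIV" "(x, b)" "msmul (- \<i>) G" "tensor_ket0 psi" t]
      finite_I assms
    unfolding u_def msmul_minus_i by (simp add: mapply_msmul)
  from this[of False] this[of True] show
    "((\<lambda>t. u0 t x) has_vector_derivative
           - \<i> * (act HI (u0 t) x + act HX (u1 t) x + act Helse (u0 t) x)) (at t)"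
    "((\<lambda>t. u1 t x) has_vector_derivative
           - \<i> * (act HI (u1 t) x + act HX (u0 t) x + act H1 (u1 t) x + act Helse (u1 t) x)) (at t)"
    unfolding mapply_G using assms by (simp_all add: act_in u0_def u1_def)
qed

lemma has_vector_derivative_act:
  assumes "\<And>y. y \<in> I \<Longrightarrow> ((\<lambda>t. f t y) has_vector_derivative f' y) (at t)"
  shows "((\<lambda>t. act M (f t) x) has_vector_derivative act M f' x) (at t)"
proof (cases "x \<in> I")
  case True
  have "((\<lambda>t. mapply I M (f t) x) has_vector_derivative mapply I M f' x) (at t)"
    unfolding mapply_def by (intro has_vector_derivative_sum has_vector_derivative_mult_right assms)
  then show ?thesis using True by (simp add: act_in)
qed (simp add: act_def)

lemma has_vector_derivative_XHX:
  assumes "\<And>y. y \<in> I \<Longrightarrow> ((\<lambda>t. f t y) has_vector_derivative f' y) (at t)"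
  shows "((\<lambda>t. XHX (f t) x) has_vector_derivative XHX f' x) (at t)"
  unfolding XHX_def by (intro has_vector_derivative_mult_right has_vector_derivative_act assms)

lemma has_vector_derivative_XX:
  assumes "\<And>y. y \<in> I \<Longrightarrow> ((\<lambda>t. f t y) has_vector_derivative f' y) (at t)"
  shows "((\<lambda>t. XX (f t) x) has_vector_derivative XX f' x) (at t)"
  unfolding XX_def by (intro has_vector_derivative_mult_right has_vector_derivative_act assms)

text \<open>The ansatz is exact at t = 0 and, as \<alpha>, \<beta>, \<gamma> vanish at t = dt = 2 pi / \<omega>,
  reduces to (\<phi> dt, 0) at the final time.\<close>

definition a0 :: "real \<Rightarrow> 'a cvec" where
  "a0 t = (\<lambda>x. \<phi> t x + \<alpha> t * XHX (\<phi> t) x + \<beta> t * XX (\<phi> t) x)"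

definition a1 :: "real \<Rightarrow> 'a cvec" where
  "a1 t = (\<lambda>x. \<gamma> t * act H1 (act HX (\<phi> t)) x + \<alpha> t * act HX (\<phi> t) x)"

definition e0 :: "real \<Rightarrow> 'a cvec" where "e0 t = (\<lambda>x. u0 t x - a0 t x)"
definition e1 :: "real \<Rightarrow> 'a cvec" where "e1 t = (\<lambda>x. u1 t x - a1 t x)"

definition da0 :: "real \<Rightarrow> 'a cvec" where
  "da0 t = (\<lambda>x. dphi t x
     + (\<alpha> t * XHX (dphi t) x + - \<i> * complex_of_real (cos (\<omega> * t)) * XHX (\<phi> t) x)
     + (\<beta> t * XX (dphi t) x + - complex_of_real (sin (\<omega> * t)) * XX (\<phi> t) x))"

definition da1 :: "real \<Rightarrow> 'a cvec" where
  "da1 t = (\<lambda>x. (\<gamma> t * act H1 (act HX (dphi t)) x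
       + - complex_of_real (sin (\<omega> * t) / \<omega>) * act H1 (act HX (\<phi> t)) x)
     + (\<alpha> t * act HX (dphi t) x + - \<i> * complex_of_real (cos (\<omega> * t)) * act HX (\<phi> t) x))"

lemma has_vector_derivative_a0: "x \<in> I \<Longrightarrow> ((\<lambda>t. a0 t x) has_vector_derivative da0 t x) (at t)"
  unfolding a0_def da0_def
  by (intro has_vector_derivative_add has_vector_derivative_mult has_vector_derivative_\<phi>
        has_vector_derivative_\<alpha> has_vector_derivative_\<beta> has_vector_derivative_XHX has_vector_derivative_XX)

lemma has_vector_derivative_a1: "((\<lambda>t. a1 t x) has_vector_derivative da1 t x) (at t)"
  unfolding a1_def da1_def
  by (intro has_vector_derivative_add has_vector_derivative_mult has_vector_derivative_\<phi>
        has_vector_derivative_\<alpha> has_vector_derivative_\<gamma> has_vector_derivative_act)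

text \<open>bracket A v is A applied after the effective local Hamiltonian HI - XHX + L, minus
  HI + L applied after A; all residuals of the ansatz are made of such terms.\<close>

definition bracket :: "('a cvec \<Rightarrow> 'a cvec) \<Rightarrow> 'a cvec \<Rightarrow> 'a cvec" where
  "bracket A v = (\<lambda>x. A (act HI v) x - act HI (A v) x - A (XHX v) x + A (act L v) x - act L (A v) x)"

definition R0 :: "real \<Rightarrow> 'a cvec" where
  "R0 t = (\<lambda>x. \<i> * \<alpha> t * bracket XHX (\<phi> t) x + \<i> * \<beta> t * bracket XX (\<phi> t) x)"

definition R1 :: "real \<Rightarrow> 'a cvec" where
  "R1 t = (\<lambda>x. \<i> * \<gamma> t * bracket (\<lambda>v. act H1 (act HX v)) (\<phi> t) x
     + \<i> * \<alpha> t * bracket (act HX) (\<phi> t) x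
     + - \<i> * \<alpha> t * act HX (XHX (\<phi> t)) x + - \<i> * \<beta> t * act HX (XX (\<phi> t)) x)"

definition de0 :: "real \<Rightarrow> 'a cvec" where
  "de0 t = (\<lambda>x. - \<i> * act HI (e0 t) x + - \<i> * act Helse (e0 t) x + - \<i> * act HX (e1 t) x + R0 t x)"

definition de1 :: "real \<Rightarrow> 'a cvec" where
  "de1 t = (\<lambda>x. - \<i> * act HI (e1 t) x + - \<i> * act H1 (e1 t) x + - \<i> * act Helse (e1 t) x
     + - \<i> * act HX (e0 t) x + R1 t x)"

lemma has_vector_derivative_e0:
  assumes "x \<in> I"
  shows "((\<lambda>t. e0 t x) has_vector_derivative de0 t x) (at t)"
proof -
  have "((\<lambda>t. e0 t x) has_vector_derivative
     - \<i> * (act HI (u0 t) x + act HX (u1 t) x + act Helse (u0 t) x) - da0 t x) (at t)"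
    unfolding e0_def by (intro has_vector_derivative_diff has_vector_derivative_u has_vector_derivative_a0 has_vector_derivative_a1 assms)
  moreover have "- \<i> * (act HI (u0 t) x + act HX (u1 t) x + act Helse (u0 t) x) - da0 t x
     = - \<i> * act HI (e0 t) x + - \<i> * act Helse (e0 t) x + - \<i> * act HX (e1 t) x + R0 t x"
    unfolding da0_def e0_def e1_def a0_def a1_def dphi_def R0_def bracket_def XHX_def XX_def
      \<alpha>_def \<beta>_def \<gamma>_def
    apply (simp only: act_add act_diff act_scale act_Helse act_F_commute)
    using \<omega>_pos apply (simp add: field_simps)
    done
  ultimately show ?thesis unfolding de0_def by simp
qed

lemma has_vector_derivative_e1:
  assumes "x \<in> I"
  shows "((\<lambda>t. e1 t x) has_vector_derivative de1 t x) (at t)"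
proof -
  have "((\<lambda>t. e1 t x) has_vector_derivative
     - \<i> * (act HI (u1 t) x + act HX (u0 t) x + act H1 (u1 t) x + act Helse (u1 t) x) - da1 t x) (at t)"
    unfolding e1_def by (intro has_vector_derivative_diff has_vector_derivative_u has_vector_derivative_a0 has_vector_derivative_a1 assms)
  moreover have "- \<i> * (act HI (u1 t) x + act HX (u0 t) x + act H1 (u1 t) x + act Helse (u1 t) x) - da1 t x
     = - \<i> * act HI (e1 t) x + - \<i> * act H1 (e1 t) x + - \<i> * act Helse (e1 t) x + - \<i> * act HX (e0 t) x
       + R1 t x"
    unfolding da1_def e0_def e1_def a0_def a1_def dphi_def R1_def bracket_def XHX_def XX_def
      \<alpha>_def \<beta>_def \<gamma>_def
    apply (simp only: act_add act_diff act_scale act_Helse act_F_commute act_H1_H1)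
    using \<omega>_pos apply (simp add: field_simps)
    done
  ultimately show ?thesis unfolding de1_def by simp
qed

lemma vnorm_bracket_le:
  assumes A: "bounded_by A a"
  shows "vnorm I (bracket A v) \<le> a * bracket_const c lc * vnorm I v"
proof -
  have "vnorm I (bracket A v) \<le> vnorm I (A (act HI v)) + vnorm I (act HI (A v)) + vnorm I (A (XHX v))
      + vnorm I (A (act L v)) + vnorm I (act L (A v))"
    unfolding bracket_def by (rule vnorm_alternating5_le)
  also have "\<dots> \<le> (a * c) * vnorm I v + (c * a) * vnorm I v + (a * c ^ 3) * vnorm I v
      + (a * lc) * vnorm I v + (lc * a) * vnorm I v"
    by (intro add_mono bounded_byD bounded_by_comp A bounded_by_HI bounded_by_L bounded_by_XHX)
  also have "\<dots> = a * bracket_const c lc * vnorm I v"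
    unfolding bracket_const_def by (simp add: algebra_simps)
  finally show ?thesis .
qed

lemma vnorm_R0_le: "vnorm I (R0 t) \<le> dt * residual0_const c lc * vnorm I (\<phi> t)"
proof -
  let ?S = "bracket_const c lc * vnorm I (\<phi> t)"
  have "vnorm I (R0 t) \<le> vnorm I (\<lambda>x. \<i> * \<alpha> t * bracket XHX (\<phi> t) x)
      + vnorm I (\<lambda>x. \<i> * \<beta> t * bracket XX (\<phi> t) x)"
    unfolding R0_def by (rule vnorm_add)
  also have "\<dots> = cmod (\<alpha> t) * vnorm I (bracket XHX (\<phi> t)) + cmod (\<beta> t) * vnorm I (bracket XX (\<phi> t))"
    by (simp add: vnorm_scale norm_mult)
  also have "\<dots> \<le> dt * (c ^ 3 * ?S) + dt * (c ^ 2 * ?S)"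
    using dt_pos vnorm_bracket_le[OF bounded_by_XHX] vnorm_bracket_le[OF bounded_by_XX]
    by (intro add_mono mult_mono norm_\<alpha>_le norm_\<beta>_le) (auto simp: mult.assoc)
  also have "\<dots> = dt * residual0_const c lc * vnorm I (\<phi> t)"
    unfolding residual0_const_def by (simp add: algebra_simps)
  finally show ?thesis .
qed

lemma vnorm_R1_le: "vnorm I (R1 t) \<le> sqrt dt * residual1_const c lc * vnorm I (\<phi> t)"
proof -
  let ?N = "vnorm I (\<phi> t)" and ?S = "bracket_const c lc"
  have HX_H1: "bounded_by (\<lambda>v. act H1 (act HX v)) (c / dt * (c / sqrt dt))"
    by (intro bounded_by_comp bounded_by_H1 bounded_by_HX)
  have "vnorm I (R1 t) \<le> vnorm I (\<lambda>x. \<i> * \<gamma> t * bracket (\<lambda>v. act H1 (act HX v)) (\<phi> t) x)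
      + vnorm I (\<lambda>x. \<i> * \<alpha> t * bracket (act HX) (\<phi> t) x)
      + vnorm I (\<lambda>x. - \<i> * \<alpha> t * act HX (XHX (\<phi> t)) x)
      + vnorm I (\<lambda>x. - \<i> * \<beta> t * act HX (XX (\<phi> t)) x)"
    unfolding R1_def by (rule vnorm_add4_le)
  also have "\<dots> = cmod (\<gamma> t) * vnorm I (bracket (\<lambda>v. act H1 (act HX v)) (\<phi> t))
      + cmod (\<alpha> t) * vnorm I (bracket (act HX) (\<phi> t))
      + cmod (\<alpha> t) * vnorm I (act HX (XHX (\<phi> t))) + cmod (\<beta> t) * vnorm I (act HX (XX (\<phi> t)))"
    unfolding vnorm_scale[of I "\<i> * \<gamma> t"] vnorm_scale[of I "\<i> * \<alpha> t"]
      vnorm_scale[of I "- \<i> * \<alpha> t"] vnorm_scale[of I "- \<i> * \<beta> t"]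
    by (simp add: norm_mult)
  also have "\<dots> \<le> dt\<^sup>2 * (c / dt * (c / sqrt dt) * ?S * ?N) + dt * (c / sqrt dt * ?S * ?N)
      + dt * ((c / sqrt dt * c ^ 3) * ?N) + dt * ((c / sqrt dt * c ^ 2) * ?N)"
  proof -
    have "vnorm I (bracket (\<lambda>v. act H1 (act HX v)) (\<phi> t)) \<le> c / dt * (c / sqrt dt) * ?S * ?N"
      by (rule vnorm_bracket_le[OF HX_H1])
    moreover have "vnorm I (bracket (act HX) (\<phi> t)) \<le> c / sqrt dt * ?S * ?N"
      by (rule vnorm_bracket_le[OF bounded_by_HX])
    moreover have "vnorm I (act HX (XHX (\<phi> t))) \<le> (c / sqrt dt * c ^ 3) * ?N"
      by (rule bounded_byD[OF bounded_by_comp[OF bounded_by_HX bounded_by_XHX]])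
    moreover have "vnorm I (act HX (XX (\<phi> t))) \<le> (c / sqrt dt * c ^ 2) * ?N"
      by (rule bounded_byD[OF bounded_by_comp[OF bounded_by_HX bounded_by_XX]])
    ultimately show ?thesis
      using dt_pos by (intro add_mono mult_mono norm_\<alpha>_le norm_\<beta>_le norm_\<gamma>_le) auto
  qed
  also have "\<dots> = (dt\<^sup>2 * (c / dt * (c / sqrt dt))) * ?S * ?N + (dt * (c / sqrt dt)) * ?S * ?N
      + (dt * (c / sqrt dt)) * c ^ 3 * ?N + (dt * (c / sqrt dt)) * c ^ 2 * ?N"
    by (simp only: mult.assoc)
  also have "dt\<^sup>2 * (c / dt * (c / sqrt dt)) = c ^ 2 * sqrt dt"
    using dt_pos real_div_sqrt[of dt] by (simp add: field_simps power2_eq_square)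
  also have "dt * (c / sqrt dt) = c * sqrt dt"
    using dt_pos real_div_sqrt[of dt] by (simp add: field_simps)
  also have "c ^ 2 * sqrt dt * ?S * ?N + c * sqrt dt * ?S * ?N + c * sqrt dt * c ^ 3 * ?N
      + c * sqrt dt * c ^ 2 * ?N = sqrt dt * residual1_const c lc * ?N"
    unfolding residual1_const_def by (simp add: algebra_simps power_numeral_reduce)
  finally show ?thesis .
qed

lemma vnorm_\<phi>: "vnorm I (\<phi> t) = vnorm I psi"
proof -
  have "Re (vinner I (\<phi> t) (dphi t)) = 0" for t
  proof -
    have "Im (vinner I (\<phi> t) (XHX (\<phi> t))) = 0"
      using vinner_act_act_real[OF herm_HX herm_H1] unfolding XHX_def vinner_scale by simp
    then show ?thesis
      using Re_vinner_act_skew_diag[OF herm_HI] Re_vinner_act_skew_diag[OF herm_Helse]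
      unfolding dphi_def vinner_add vinner_scale by simp
  qed
  then have "((\<lambda>t. (vnorm I (\<phi> t))\<^sup>2) has_real_derivative 0) (at t)" for t
    using has_real_derivative_vnorm_sq[of I \<phi> "dphi t" t, OF finite_I has_vector_derivative_\<phi>] by simp
  then have "(vnorm I (\<phi> t))\<^sup>2 = (vnorm I (\<phi> 0))\<^sup>2"
    using DERIV_isconst_all[of "\<lambda>t. (vnorm I (\<phi> t))\<^sup>2" t 0] by blast
  also have "vnorm I (\<phi> 0) = vnorm I psi" by (rule vnorm_cong) (simp add: \<phi>_at_0)
  finally show ?thesis by (simp add: power2_eq_iff_nonneg)
qed

lemma Re_vinner_error_derivative:
  "Re (vinner I (e0 t) (de0 t))
     = Re (vinner I (e0 t) (\<lambda>x. - \<i> * act HX (e1 t) x)) + Re (vinner I (e0 t) (R0 t))"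
  "Re (vinner I (e0 t) (de0 t)) + Re (vinner I (e1 t) (de1 t))
     = Re (vinner I (e0 t) (R0 t)) + Re (vinner I (e1 t) (R1 t))"
  using Re_vinner_act_skew_diag[OF herm_HI] Re_vinner_act_skew_diag[OF herm_Helse]
    Re_vinner_act_skew_diag[OF herm_H1] Re_vinner_act_skew[OF herm_HX, of "e0 t" "e1 t"]
  unfolding de0_def de1_def vinner_add by simp_all

lemma errors_at_0: "x \<in> I \<Longrightarrow> e0 0 x = 0" "x \<in> I \<Longrightarrow> e1 0 x = 0"
  unfolding e0_def e1_def u0_def u1_def a0_def a1_def
  by (simp_all add: u_at_0 tensor_ket0_def \<phi>_at_0 coefficients_at_0)

abbreviation residual_bound :: real where
  "residual_bound \<equiv> (dt * residual0_const c lc + sqrt dt * residual1_const c lc) * vnorm I psi"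

lemma residual_bound_nonneg: "0 \<le> residual_bound"
  using residual_consts_nonneg[OF c_nonneg lc_nonneg] dt_pos by simp

lemma vnorm_error_pair_le:
  assumes "0 \<le> T"
  shows "sqrt ((vnorm I (e0 T))\<^sup>2 + (vnorm I (e1 T))\<^sup>2) \<le> T * residual_bound"
proof (rule sqrt_le_of_energy_growth[OF assms residual_bound_nonneg])
  show "((\<lambda>t. (vnorm I (e0 t))\<^sup>2 + (vnorm I (e1 t))\<^sup>2) has_real_derivative
     2 * Re (vinner I (e0 t) (de0 t)) + 2 * Re (vinner I (e1 t) (de1 t))) (at t)" for t
    by (intro DERIV_add has_real_derivative_vnorm_sq finite_I has_vector_derivative_e0
        has_vector_derivative_e1)
  show "(vnorm I (e0 0))\<^sup>2 + (vnorm I (e1 0))\<^sup>2 = 0"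
    using vnorm_eq_0[of I "e0 0", OF errors_at_0(1)] vnorm_eq_0[of I "e1 0", OF errors_at_0(2)] by simp
  fix t
  let ?s = "sqrt ((vnorm I (e0 t))\<^sup>2 + (vnorm I (e1 t))\<^sup>2)"
  show "0 \<le> (vnorm I (e0 t))\<^sup>2 + (vnorm I (e1 t))\<^sup>2" by simp
  have "vnorm I (e0 t) \<le> ?s" "vnorm I (e1 t) \<le> ?s" by (simp_all add: real_le_rsqrt)
  moreover have "vnorm I (R0 t) \<le> dt * residual0_const c lc * vnorm I psi"
    "vnorm I (R1 t) \<le> sqrt dt * residual1_const c lc * vnorm I psi"
    using vnorm_R0_le vnorm_R1_le unfolding vnorm_\<phi> by blast+
  ultimately have "Re (vinner I (e0 t) (R0 t)) + Re (vinner I (e1 t) (R1 t))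
      \<le> ?s * (dt * residual0_const c lc * vnorm I psi) + ?s * (sqrt dt * residual1_const c lc * vnorm I psi)"
    by (intro add_mono order_trans[OF Re_vinner_le] mult_mono) auto
  then show "2 * Re (vinner I (e0 t) (de0 t)) + 2 * Re (vinner I (e1 t) (de1 t)) \<le> 2 * ?s * residual_bound"
    using Re_vinner_error_derivative(2)[of t] by (simp add: algebra_simps)
qed

lemma vnorm_e1_le:
  assumes "0 \<le> T"
  shows "vnorm I (e1 T) \<le> T * residual_bound"
proof -
  have "vnorm I (e1 T) \<le> sqrt ((vnorm I (e0 T))\<^sup>2 + (vnorm I (e1 T))\<^sup>2)" by (rule real_le_rsqrt) simp
  with vnorm_error_pair_le[OF assms] show ?thesis by linarith
qed

text \<open>Feeding the bound for e1 back into the equation for e0 alone gains a factor sqrt dt: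
  e1 enters only through HX, of norm c / sqrt dt, over a time dt.\<close>

lemma vnorm_e0_le:
  "vnorm I (e0 dt) \<le> dt * (c / sqrt dt * (dt * residual_bound) + dt * residual0_const c lc * vnorm I psi)"
proof -
  let ?K = "c / sqrt dt * (dt * residual_bound) + dt * residual0_const c lc * vnorm I psi"
  have "Re (vinner I (e0 t) (de0 t)) \<le> vnorm I (e0 t) * ?K" if t: "0 \<le> t" "t \<le> dt" for t
  proof -
    have "vnorm I (\<lambda>x. - \<i> * act HX (e1 t) x) \<le> c / sqrt dt * vnorm I (e1 t)"
      unfolding vnorm_scale[of I "- \<i>"] using bounded_byD[OF bounded_by_HX] by simp
    also have "\<dots> \<le> c / sqrt dt * (dt * residual_bound)"
      using vnorm_e1_le[OF t(1)] t residual_bound_nonneg c_nonneg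
      by (intro mult_left_mono order_trans[OF _ mult_right_mono[OF t(2)]]) auto
    finally have "Re (vinner I (e0 t) (\<lambda>x. - \<i> * act HX (e1 t) x)) + Re (vinner I (e0 t) (R0 t))
        \<le> vnorm I (e0 t) * (c / sqrt dt * (dt * residual_bound))
          + vnorm I (e0 t) * (dt * residual0_const c lc * vnorm I psi)"
      using vnorm_R0_le[of t] unfolding vnorm_\<phi>
      by (intro add_mono order_trans[OF Re_vinner_le] mult_left_mono) auto
    then show ?thesis unfolding Re_vinner_error_derivative(1) by (simp add: distrib_left)
  qed
  moreover have "0 \<le> ?K"
    using residual_bound_nonneg residual_consts_nonneg[OF c_nonneg lc_nonneg] c_nonneg dt_pos by simp
  ultimately show ?thesis
    using vnorm_le_of_energy_growth[OF finite_I _ _ has_vector_derivative_e0 errors_at_0(1)] dt_pos by simp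
qed

lemma final_state_ancilla1: "vnorm I (u1 dt) \<le> gadget_const c lc * dt powr (3/2) * vnorm I psi"
proof -
  have "u1 dt = e1 dt" unfolding e1_def a1_def by (simp add: coefficients_at_dt)
  then have "vnorm I (u1 dt) \<le> dt * residual_bound" using vnorm_e1_le dt_pos by simp
  also have "\<dots> \<le> dt * ((sqrt dt * residual0_const c lc + sqrt dt * residual1_const c lc) * vnorm I psi)"
  proof -
    have "dt \<le> sqrt dt" using dt_pos dt_less_1 by (simp add: real_le_rsqrt power2_eq_square)
    then show ?thesis using dt_pos residual_consts_nonneg[OF c_nonneg lc_nonneg]
      by (intro mult_left_mono mult_right_mono add_mono) auto
  qed
  also have "\<dots> = (residual0_const c lc + residual1_const c lc) * (dt * sqrt dt) * vnorm I psi"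
    by (simp add: algebra_simps)
  also have "dt * sqrt dt = dt powr (3/2)"
    using dt_pos powr_add[of dt 1 "1/2"] by (simp add: powr_half_sqrt)
  also have "(residual0_const c lc + residual1_const c lc) * dt powr (3/2) * vnorm I psi
      \<le> gadget_const c lc * dt powr (3/2) * vnorm I psi"
    using residual_consts_nonneg[OF c_nonneg lc_nonneg] c_nonneg
    by (intro mult_right_mono) (auto simp: gadget_const_def algebra_simps)
  finally show ?thesis .
qed

lemma final_state_ancilla0:
  "vnorm I (\<lambda>x. u0 dt x - \<phi> dt x) \<le> gadget_const c lc * dt\<^sup>2 * vnorm I psi"
proof -
  let ?K0 = "residual0_const c lc" and ?K1 = "residual1_const c lc" and ?N = "vnorm I psi"
  have "(\<lambda>x. u0 dt x - \<phi> dt x) = e0 dt" unfolding e0_def a0_def by (simp add: coefficients_at_dt)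
  then have "vnorm I (\<lambda>x. u0 dt x - \<phi> dt x)
      \<le> dt * (c / sqrt dt * (dt * residual_bound) + dt * ?K0 * ?N)"
    using vnorm_e0_le by simp
  also have "\<dots> = dt\<^sup>2 * ((c * sqrt dt * ?K0 + c * ?K1 + ?K0) * ?N)"
    using dt_pos real_div_sqrt[of dt] by (simp add: field_simps power2_eq_square)
  also have "\<dots> \<le> dt\<^sup>2 * ((c * ?K0 + c * ?K1 + ?K0) * ?N)"
  proof -
    have "sqrt dt \<le> 1" using dt_less_1 dt_pos by simp
    then show ?thesis using c_nonneg residual_consts_nonneg[OF c_nonneg lc_nonneg]
      by (intro mult_left_mono mult_right_mono add_mono) (auto intro: mult_left_le)
  qed
  also have "\<dots> \<le> gadget_const c lc * dt\<^sup>2 * vnorm I psi"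
    using residual_consts_nonneg[OF c_nonneg lc_nonneg] c_nonneg
    by (simp add: gadget_const_def algebra_simps mult_right_mono)
  finally show ?thesis .
qed

end

section \<open>The gadget inside a local Hamiltonian\<close>

lemma ancilla_gadget_local:
  fixes n :: nat and dims :: "nat \<Rightarrow> nat" and T S :: "nat set" and supp :: "nat \<Rightarrow> nat set"
    and dt c :: real
  defines "I \<equiv> configs n dims"
    and "near \<equiv> {j\<in>T. supp j \<inter> S \<noteq> {}}" and "far \<equiv> {j\<in>T. supp j \<inter> S = {}}"
  assumes T: "finite T"
    and terms: "\<forall>j\<in>T. acts_on n dims (supp j) (h j) \<and> hermitian I (h j) \<and> opnorm I (h j) \<le> c"
    and degree: "\<forall>i<n. card {j\<in>T. i \<in> supp j} \<le> D"
    and S: "S \<subseteq> {..<n}" "card S \<le> s"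
    and acts: "acts_on n dims S HI" "acts_on n dims S HX" "acts_on n dims S H1"
    and herm: "hermitian I HI" "hermitian I HX" "hermitian I H1"
    and dt: "0 < dt" "dt < 1"
    and norms: "opnorm I HI \<le> c" "opnorm I HX \<le> c * dt powr (-1/2)" "opnorm I H1 \<le> c / dt"
    and square: "mat_eq_on I (mmul I H1 H1) (msmul (complex_of_real ((2 * pi / dt)\<^sup>2)) mid)"
  shows "ancilla_gadget I HI HX H1 (\<lambda>x y. \<Sum>j\<in>T. h j x y) (\<lambda>x y. \<Sum>j\<in>near. h j x y)
           (\<lambda>x y. \<Sum>j\<in>far. h j x y) dt \<bar>c\<bar> (real (s * D) * \<bar>c\<bar>)"
proof
  show "finite I" unfolding I_def by (rule finite_configs)
  show "hermitian I (\<lambda>x y. \<Sum>j\<in>T. h j x y)" using terms by (intro hermitian_sum) blast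
  show "opnorm I HI \<le> \<bar>c\<bar>" using norms(1) by simp
  show "opnorm I H1 \<le> \<bar>c\<bar> / dt"
    using norms(3) divide_right_mono[of c "\<bar>c\<bar>" dt] dt by linarith
  show "opnorm I HX \<le> \<bar>c\<bar> * dt powr (-1/2)"
    using norms(2) by (smt (verit) mult_right_mono powr_ge_zero)
  show "(\<lambda>x y. \<Sum>j\<in>T. h j x y) = madd (\<lambda>x y. \<Sum>j\<in>near. h j x y) (\<lambda>x y. \<Sum>j\<in>far. h j x y)"
  proof -
    have "T = near \<union> far" "near \<inter> far = {}" unfolding near_def far_def by auto
    then show ?thesis unfolding madd_def using T by (auto intro!: ext sum.union_disjoint)
  qed
  show "vnorm I (mapply I (\<lambda>x y. \<Sum>j\<in>near. h j x y) v) \<le> real (s * D) * \<bar>c\<bar> * vnorm I v" for v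
  proof -
    have "card near \<le> s * D"
      using card_terms_meeting_le[OF T S(1)] degree S(2) unfolding near_def
      by (meson le_trans mult_le_mono1)
    then have "real (card near) \<le> real (s * D)" by (simp only: of_nat_le_iff)
    then have "real (card near) * \<bar>c\<bar> * vnorm I v \<le> real (s * D) * \<bar>c\<bar> * vnorm I v"
      by (intro mult_right_mono) auto
    moreover have "vnorm I (mapply I (\<lambda>x y. \<Sum>j\<in>near. h j x y) v) \<le> real (card near) * \<bar>c\<bar> * vnorm I v"
      unfolding I_def
    proof (rule vnorm_mapply_sum_le[OF finite_configs])
      fix j assume "j \<in> near"
      then show "opnorm (configs n dims) (h j) \<le> \<bar>c\<bar>" using terms unfolding near_def I_def by fastforce
    qed
    ultimately show ?thesis by linarith
  qed
  show "mapply I (\<lambda>x y. \<Sum>j\<in>far. h j x y) (mapply I M v) x = mapply I M (mapply I (\<lambda>x y. \<Sum>j\<in>far. h j x y) v) x"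
    if "M \<in> {HI, HX, H1}" "x \<in> I" for M v x
    using that acts terms unfolding I_def far_def
    by (intro acts_on_disjoint_sum_commute[where S = S]) auto
qed (use herm dt square in simp_all)

theorem proposition3p5:
  fixes k D s d :: nat and c :: real
  shows "\<exists>C \<delta>0 :: real. C > 0 \<and> \<delta>0 > 0 \<and>
   (\<forall>(n::nat) (dims::nat \<Rightarrow> nat) (T::nat set) (supp::nat \<Rightarrow> nat set)
      (h::nat \<Rightarrow> (nat \<Rightarrow> nat) cmat) (HI::(nat \<Rightarrow> nat) cmat) (HX::(nat \<Rightarrow> nat) cmat)
      (H1::(nat \<Rightarrow> nat) cmat) (S::nat set) (\<delta>t::real) (\<psi>::(nat \<Rightarrow> nat) cvec).
    let I = configs n dims;
        J = I \<times> (UNIV :: bool set);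
        \<omega> = 2 * pi / \<delta>t;
        Helse = (\<lambda>x y. \<Sum>j\<in>T. h j x y);
        H = madd HI (msmul (- complex_of_real (1 / \<omega>\<^sup>2)) (mmul I (mmul I HX H1) HX));
        Hp = madd (kron HI mid) (madd (kron HX pauliX) (kron H1 proj1));
        \<Phi> = mapply J (mexp J (msmul (- \<i> * complex_of_real \<delta>t) (madd Hp (kron Helse mid))))
              (tensor_ket0 \<psi>)
    in
    ((\<forall>i<n. 1 \<le> dims i \<and> dims i \<le> d) \<and> finite T \<and>
     (\<forall>j\<in>T. supp j \<subseteq> {..<n} \<and> card (supp j) \<le> k \<and> acts_on n dims (supp j) (h j) \<and>
             hermitian I (h j) \<and> opnorm I (h j) \<le> c) \<and>
     (\<forall>i<n. card {j\<in>T. i \<in> supp j} \<le> D) \<and>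
     S \<subseteq> {..<n} \<and> card S \<le> s \<and>
     acts_on n dims S HI \<and> acts_on n dims S HX \<and> acts_on n dims S H1 \<and>
     hermitian I HI \<and> hermitian I HX \<and> hermitian I H1 \<and>
     0 < \<delta>t \<and> \<delta>t < \<delta>0 \<and>
     opnorm I HI \<le> c \<and> opnorm I HX \<le> c * \<delta>t powr (-1/2) \<and> opnorm I H1 \<le> c / \<delta>t \<and>
     mat_eq_on I (mmul I H1 H1) (msmul (complex_of_real (\<omega>\<^sup>2)) mid))
    \<longrightarrow>
    (vnorm I (\<lambda>x. \<Phi> (x, False)
                   - mapply I (mexp I (msmul (- \<i> * complex_of_real \<delta>t) (madd H Helse))) \<psi> x)
       \<le> C * \<delta>t\<^sup>2 * vnorm I \<psi> \<and>
     vnorm I (\<lambda>x. \<Phi> (x, True)) \<le> C * \<delta>t powr (3/2) * vnorm I \<psi>))"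
proof -
  define C where "C = gadget_const \<bar>c\<bar> (real (s * D) * \<bar>c\<bar>)"
  have "0 < C" unfolding C_def by (rule gadget_const_pos) auto
  show ?thesis
    unfolding Let_def
  proof (intro exI[of _ C] exI[of _ "1::real"] conjI[OF \<open>0 < C\<close> conjI[OF zero_less_one]] allI impI,
         elim conjE, goal_cases)
    case (1 n dims T supp h HI HX H1 S dt psi)
    interpret ancilla_gadget "configs n dims" HI HX H1 "\<lambda>x y. \<Sum>j\<in>T. h j x y"
      "\<lambda>x y. \<Sum>j\<in>{j\<in>T. supp j \<inter> S \<noteq> {}}. h j x y" "\<lambda>x y. \<Sum>j\<in>{j\<in>T. supp j \<inter> S = {}}. h j x y"
      dt "\<bar>c\<bar>" "real (s * D) * \<bar>c\<bar>" psi
      using 1 by (intro ancilla_gadget_local) auto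
    show ?case
      using final_state_ancilla0 final_state_ancilla1
      unfolding C_def u0_def u1_def u_def \<phi>_def Heff_def G_def \<omega>_def by simp
  qed
qed

end
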